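(* Let $F:\mathbb{R}^n\rightrightarrows\mathbb{R}^n$ be upper semicontinuous with $F(x)$ nonempty, compact and convex for all $x$, and consider $\Sigma:\dot x\in F(x)$. A closed set $K\subset\mathbb{R}^n$ is forward invariant for $\Sigma$ if $$F(x)\subset T_K(y)\qquad\forall x\in\mathbb{R}^n\setminus K,\ \forall y\in\mathrm{Proj}_K(x).$$
   Context: A closed set $K$ is forward invariant for $\Sigma$ if every solution (locally absolutely continuous $\phi$ with $\dot\phi(t)\in F(\phi(t))$ a.e.) starting in $K$ satisfies $\phi(\mathrm{dom}\,\phi)\subset K$. $\mathrm{Proj}_K(x):=\{y\in K:|x-y|=\inf_{z\in K}|x-z|\}$. $T_K(y)$ denotes the contingent (Bouligand tangent) cone to $K$ at $y$: $T_K(y):=\{v\in\mathbb{R}^n:\liminf_{h\to0^+}\frac{|y+hv|_K}{h}=0\}$, where $|z|_K$ is the distance from $z$ to $K$. *)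

theory Defs
  imports "HOL-Analysis.Analysis"
begin

definition usc_setvalued :: "('a::metric_space \<Rightarrow> 'b::topological_space set) \<Rightarrow> bool" where
  "usc_setvalued F \<longleftrightarrow>
     (\<forall>x U. open U \<and> F x \<subseteq> U \<longrightarrow> (\<exists>d>0. \<forall>y. dist y x < d \<longrightarrow> F y \<subseteq> U))"

definition abs_cont_on :: "real set \<Rightarrow> (real \<Rightarrow> 'a::real_normed_vector) \<Rightarrow> bool" where
  "abs_cont_on S f \<longleftrightarrow>
     (\<forall>e>0. \<exists>d>0. \<forall>D. finite D
        \<and> (\<forall>(a,b)\<in>D. a \<le> b \<and> {a..b} \<subseteq> S)
        \<and> disjoint_family_on (\<lambda>(a,b). {a<..<b}) D
        \<and> (\<Sum>(a,b)\<in>D. b - a) < d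
        \<longrightarrow> (\<Sum>(a,b)\<in>D. norm (f b - f a)) < e)"

definition loc_abs_cont_on :: "real set \<Rightarrow> (real \<Rightarrow> 'a::real_normed_vector) \<Rightarrow> bool" where
  "loc_abs_cont_on I f \<longleftrightarrow> (\<forall>a b. {a..b} \<subseteq> I \<longrightarrow> abs_cont_on {a..b} f)"

definition is_solution ::
  "('a::euclidean_space \<Rightarrow> 'a set) \<Rightarrow> real set \<Rightarrow> (real \<Rightarrow> 'a) \<Rightarrow> bool" where
  "is_solution F I \<phi> \<longleftrightarrow>
     is_interval I \<and> 0 \<in> I \<and> I \<subseteq> {0..} \<and>
     loc_abs_cont_on I \<phi> \<and>
     (AE t in lebesgue. t \<in> I \<longrightarrow>
        (\<exists>v. (\<phi> has_vector_derivative v) (at t within I) \<and> v \<in> F (\<phi> t)))"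

definition forward_invariant :: "('a::euclidean_space \<Rightarrow> 'a set) \<Rightarrow> 'a set \<Rightarrow> bool" where
  "forward_invariant F K \<longleftrightarrow>
     (\<forall>I \<phi>. is_solution F I \<phi> \<and> \<phi> 0 \<in> K \<longrightarrow> \<phi> ` I \<subseteq> K)"

definition Proj :: "'a::metric_space set \<Rightarrow> 'a \<Rightarrow> 'a set" where
  "Proj K x = {y \<in> K. dist x y = infdist x K}"

definition contingent_cone :: "'a::real_normed_vector set \<Rightarrow> 'a \<Rightarrow> 'a set" where
  "contingent_cone K y =
     {v. Liminf (at_right 0) (\<lambda>h::real. ereal (infdist (y + h *\<^sub>R v) K / h)) = 0}"

end

theory Submission
  imports Defs
begin

text \<open>
  Suppose a solution \<open>\<phi>\<close> starts in \<open>K\<close> but \<open>\<phi> t\<^sub>1 \<notin> K\<close>, and let \<open>s\<^sub>0\<close> be its last time in \<open>K\<close>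
  before \<open>t\<^sub>1\<close>. For small \<open>\<epsilon> > 0\<close> the function \<open>g s = d\<^sub>K(\<phi> s) - \<epsilon> s\<close> is absolutely
  continuous with \<open>g s\<^sub>0 < g t\<^sub>1\<close>. Absolutely continuous functions map null sets to null sets,
  so some level between \<open>g s\<^sub>0\<close> and \<open>g t\<^sub>1\<close> is not taken on the null set where \<open>\<phi>\<close> fails to
  satisfy the inclusion; at the last time \<open>t\<close> the level is taken, \<open>\<phi>' t \<in> F (\<phi> t)\<close> exists
  and \<open>g\<close> lies strictly above \<open>g t\<close> to the right of \<open>t\<close>, i.e. \<open>d\<^sub>K \<circ> \<phi>\<close> grows at rate at least \<open>\<epsilon>\<close>.
  But for a projection \<open>y\<close> of \<open>\<phi> t\<close> onto \<open>K\<close> the hypothesis puts \<open>\<phi>' t\<close> into the contingent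
  cone at \<open>y\<close>, which is contained in the half-space \<open>(\<phi> t - y) \<bullet> v \<le> 0\<close>; hence
  \<open>|\<phi> s - y|\<close>, an upper bound for \<open>d\<^sub>K(\<phi> s)\<close>, grows at rate at most \<open>0\<close> -- a contradiction.
\<close>

lemma norm_diff_scaleR_le:
  fixes u v :: "'a::real_inner"
  assumes "0 \<le> h" "h * (norm v)\<^sup>2 \<le> u \<bullet> v" "h * (u \<bullet> v) \<le> 2 * (norm u)\<^sup>2"
  shows "norm (u - h *\<^sub>R v) \<le> norm u - h * (u \<bullet> v) / (2 * norm u)"
proof (cases "u = 0")
  case True
  with assms(1,2) have "h = 0 \<or> v = 0"
    by (auto simp: mult_le_0_iff)
  with True show ?thesis by auto
next
  case False
  define c where "c = h * (u \<bullet> v) / (2 * norm u)"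
  have uv: "0 \<le> u \<bullet> v" using assms(1,2) by (meson order_trans zero_le_mult_iff zero_le_power2)
  have c: "0 \<le> c" "c \<le> norm u"
    using assms(1,3) False uv by (auto simp: c_def divide_le_eq power2_eq_square)
  have "(norm (u - h *\<^sub>R v))\<^sup>2 = (norm u)\<^sup>2 - 2 * h * (u \<bullet> v) + h\<^sup>2 * (norm v)\<^sup>2"
    unfolding power2_norm_eq_inner
    by (simp add: inner_diff_left inner_diff_right inner_commute power2_eq_square algebra_simps)
  also have "\<dots> \<le> (norm u)\<^sup>2 - h * (u \<bullet> v)"
    using mult_left_mono[OF assms(2) assms(1)] by (simp add: power2_eq_square mult.assoc)
  also have "\<dots> \<le> (norm u - c)\<^sup>2"
  proof -
    have "2 * norm u * c = h * (u \<bullet> v)" using False by (simp add: c_def)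
    moreover have "(norm u - c)\<^sup>2 = (norm u)\<^sup>2 + c\<^sup>2 - 2 * norm u * c"
      by (rule power2_diff)
    ultimately show ?thesis using zero_le_power2[of c] by linarith
  qed
  finally have "norm (u - h *\<^sub>R v) \<le> norm u - c"
    by (rule power2_le_imp_le) (use c in simp)
  then show ?thesis by (simp add: c_def)
qed

lemma inner_Proj_contingent_cone_le_0:
  fixes x y v :: "'a::real_inner"
  assumes y: "y \<in> Proj K x" and v: "v \<in> contingent_cone K y"
  shows "(x - y) \<bullet> v \<le> 0"
proof (rule ccontr)
  \<comment> \<open>otherwise moving from \<open>y\<close> along \<open>v\<close> approaches \<open>x\<close> linearly, and the distance to \<open>K\<close>
    grows linearly since it is at least \<open>d\<^sub>K x - |x - (y + h v)|\<close>\<close>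
  assume "\<not> ?thesis"
  hence p: "(x - y) \<bullet> v > 0" by simp
  define r where "r = norm (x - y)"
  define c where "c = ((x - y) \<bullet> v) / (2 * r)"
  have r: "r > 0" using p by (auto simp: r_def)
  have c: "c > 0" using p r by (simp add: c_def)
  have v0: "v \<noteq> 0" using p by auto
  define h0 where "h0 = min (((x - y) \<bullet> v) / (norm v)\<^sup>2) (2 * r\<^sup>2 / ((x - y) \<bullet> v))"
  have h0: "h0 > 0" using p r v0 by (simp add: h0_def)
  have growth: "c \<le> infdist (y + h *\<^sub>R v) K / h" if h: "0 < h" "h < h0" for h
  proof -
    have "h * (norm v)\<^sup>2 \<le> (x - y) \<bullet> v" "h * ((x - y) \<bullet> v) \<le> 2 * r\<^sup>2"
      using h p v0 by (auto simp: h0_def less_divide_eq)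
    then have "dist x (y + h *\<^sub>R v) \<le> r - c * h"
      using norm_diff_scaleR_le[of h v "x - y"] h
      by (simp add: dist_norm r_def c_def diff_diff_eq2 algebra_simps)
    moreover have "infdist x K \<le> infdist (y + h *\<^sub>R v) K + dist x (y + h *\<^sub>R v)"
      by (rule infdist_triangle)
    moreover have "infdist x K = r" using y by (simp add: Proj_def r_def dist_norm)
    ultimately show ?thesis using h by (simp add: pos_le_divide_eq mult.commute)
  qed
  have "\<forall>\<^sub>F h in at_right 0. ereal c \<le> ereal (infdist (y + h *\<^sub>R v) K / h)"
    using eventually_at_right_real[OF h0] by (rule eventually_mono) (simp add: growth)
  then have "ereal c \<le> Liminf (at_right 0) (\<lambda>h::real. ereal (infdist (y + h *\<^sub>R v) K / h))"
    by (rule Liminf_bounded)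
  moreover have "Liminf (at_right 0) (\<lambda>h::real. ereal (infdist (y + h *\<^sub>R v) K / h)) = 0"
    using v by (simp add: contingent_cone_def)
  ultimately show False using c by simp
qed

lemma abs_cont_on_imp_continuous_on:
  fixes f :: "real \<Rightarrow> 'a::real_normed_vector"
  assumes "abs_cont_on {a..b} f"
  shows "continuous_on {a..b} f"
  unfolding continuous_on_iff
proof (intro ballI allI impI)
  fix x e :: real assume x: "x \<in> {a..b}" and e: "e > 0"
  obtain \<delta> where \<delta>: "\<delta> > 0" and ac: "\<And>D. finite D \<and> (\<forall>(p,q)\<in>D. p \<le> q \<and> {p..q} \<subseteq> {a..b})
        \<and> disjoint_family_on (\<lambda>(p,q). {p<..<q}) D \<and> (\<Sum>(p,q)\<in>D. q - p) < \<delta>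
        \<Longrightarrow> (\<Sum>(p,q)\<in>D. norm (f q - f p)) < e"
    using assms e unfolding abs_cont_on_def by meson
  show "\<exists>d>0. \<forall>x'\<in>{a..b}. dist x' x < d \<longrightarrow> dist (f x') (f x) < e"
  proof (intro exI[of _ \<delta>] conjI ballI impI)
    fix x' assume x': "x' \<in> {a..b}" "dist x' x < \<delta>"
    have "(\<Sum>(p,q)\<in>{(min x x', max x x')}. norm (f q - f p)) < e"
      using x x' by (intro ac) (auto simp: disjoint_family_on_def dist_real_def)
    then show "dist (f x') (f x) < e"
      by (cases "x \<le> x'") (auto simp: dist_norm min_def max_def norm_minus_commute)
  qed (rule \<delta>)
qed

lemma abs_cont_on_subset:
  assumes "abs_cont_on S f" "T \<subseteq> S"
  shows "abs_cont_on T f"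
  unfolding abs_cont_on_def
proof (intro allI impI)
  fix e :: real assume "e > 0"
  then obtain d where "d > 0" and d: "\<And>D. finite D \<and> (\<forall>(p,q)\<in>D. p \<le> q \<and> {p..q} \<subseteq> S)
      \<and> disjoint_family_on (\<lambda>(p,q). {p<..<q}) D \<and> (\<Sum>(p,q)\<in>D. q - p) < d
      \<Longrightarrow> (\<Sum>(p,q)\<in>D. norm (f q - f p)) < e"
    using assms(1) unfolding abs_cont_on_def by meson
  have "(\<forall>(p,q)\<in>D. p \<le> q \<and> {p..q} \<subseteq> T) \<Longrightarrow> (\<forall>(p,q)\<in>D. p \<le> q \<and> {p..q} \<subseteq> S)" for D
    unfolding case_prod_beta using assms(2) by blast
  with \<open>d > 0\<close> d show "\<exists>d>0. \<forall>D. finite D \<and> (\<forall>(p,q)\<in>D. p \<le> q \<and> {p..q} \<subseteq> T)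
      \<and> disjoint_family_on (\<lambda>(p,q). {p<..<q}) D \<and> (\<Sum>(p,q)\<in>D. q - p) < d
      \<longrightarrow> (\<Sum>(p,q)\<in>D. norm (f q - f p)) < e"
    by (intro exI[of _ d]) meson
qed

lemma abs_cont_on_comparison:
  fixes f :: "real \<Rightarrow> 'a::real_normed_vector" and g :: "real \<Rightarrow> 'b::real_normed_vector"
  assumes ac: "abs_cont_on S f" and "c \<ge> 0"
    and le: "\<And>p q. p \<le> q \<Longrightarrow> {p..q} \<subseteq> S \<Longrightarrow> norm (g q - g p) \<le> norm (f q - f p) + c * (q - p)"
  shows "abs_cont_on S g"
  unfolding abs_cont_on_def
proof (intro allI impI)
  fix e :: real assume e: "e > 0"
  obtain \<delta> where \<delta>: "\<delta> > 0" and ac\<delta>: "\<And>D. finite D \<and> (\<forall>(p,q)\<in>D. p \<le> q \<and> {p..q} \<subseteq> S)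
        \<and> disjoint_family_on (\<lambda>(p,q). {p<..<q}) D \<and> (\<Sum>(p,q)\<in>D. q - p) < \<delta>
        \<Longrightarrow> (\<Sum>(p,q)\<in>D. norm (f q - f p)) < e / 2"
    using ac half_gt_zero[OF e] unfolding abs_cont_on_def by blast
  define \<delta>' where "\<delta>' = min \<delta> (e / (2 * (c + 1)))"
  show "\<exists>d>0. \<forall>D. finite D \<and> (\<forall>(a, b)\<in>D. a \<le> b \<and> {a..b} \<subseteq> S) \<and>
        disjoint_family_on (\<lambda>(a, b). {a<..<b}) D \<and> (\<Sum>(a, b)\<in>D. b - a) < d \<longrightarrow>
        (\<Sum>(a, b)\<in>D. norm (g b - g a)) < e"
  proof (intro exI[of _ \<delta>'] conjI allI impI)
    show "\<delta>' > 0" using \<delta> e \<open>c \<ge> 0\<close> by (simp add: \<delta>'_def)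
    fix D :: "(real \<times> real) set"
    assume D: "finite D \<and> (\<forall>(a, b)\<in>D. a \<le> b \<and> {a..b} \<subseteq> S) \<and>
        disjoint_family_on (\<lambda>(a, b). {a<..<b}) D \<and> (\<Sum>(a, b)\<in>D. b - a) < \<delta>'"
    then have len: "(\<Sum>(a, b)\<in>D. b - a) < \<delta>" "(\<Sum>(a, b)\<in>D. b - a) \<le> e / (2 * (c + 1))"
      unfolding \<delta>'_def by linarith+
    have "(\<Sum>(a, b)\<in>D. norm (g b - g a)) \<le> (\<Sum>(a, b)\<in>D. norm (f b - f a) + c * (b - a))"
      using D le by (intro sum_mono) auto
    also have "\<dots> = (\<Sum>(a, b)\<in>D. norm (f b - f a)) + c * (\<Sum>(a, b)\<in>D. b - a)"
      by (simp add: sum.distrib sum_distrib_left case_prod_beta)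
    also have "(\<Sum>(a, b)\<in>D. norm (f b - f a)) < e / 2"
      using D len(1) by (intro ac\<delta>) blast
    also have "c * (\<Sum>(a, b)\<in>D. b - a) \<le> c * (e / (2 * (c + 1)))"
      using len(2) \<open>c \<ge> 0\<close> by (rule mult_left_mono)
    also have "\<dots> \<le> e / 2"
      using e \<open>c \<ge> 0\<close> by (simp add: field_simps)
    finally show "(\<Sum>(a, b)\<in>D. norm (g b - g a)) < e" by simp
  qed
qed

lemma abs_cont_on_infdist_minus_linear:
  assumes "abs_cont_on S \<phi>"
  shows "abs_cont_on S (\<lambda>s. infdist (\<phi> s) K - c * s)"
proof (rule abs_cont_on_comparison[OF assms abs_ge_zero])
  fix p q :: real assume "p \<le> q"
  have "\<bar>(infdist (\<phi> q) K - c * q) - (infdist (\<phi> p) K - c * p)\<bar>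
      \<le> \<bar>infdist (\<phi> q) K - infdist (\<phi> p) K\<bar> + \<bar>c * (q - p)\<bar>"
    by (simp add: algebra_simps abs_triangle_ineq4)
  also have "\<dots> \<le> dist (\<phi> q) (\<phi> p) + \<bar>c\<bar> * (q - p)"
    using infdist_triangle_abs \<open>p \<le> q\<close> by (simp add: abs_mult)
  finally show "norm ((infdist (\<phi> q) K - c * q) - (infdist (\<phi> p) K - c * p))
      \<le> norm (\<phi> q - \<phi> p) + \<bar>c\<bar> * (q - p)"
    by (simp add: dist_norm)
qed

lemma open_interval_subset_of_closure:
  fixes C :: "real set"
  assumes "is_interval C" "open C" "p \<in> closure C" "q \<in> closure C"
  shows "{p<..<q} \<subseteq> C"
proof -
  have "is_interval (closure C)"
    using assms(1) by (simp add: is_interval_convex_1 convex_closure)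
  then have "{p<..<q} \<subseteq> closure C"
    using assms(3,4) unfolding is_interval_1 by (meson greaterThanLessThan_iff less_imp_le subsetI)
  then show ?thesis
    using open_subset_closure_of_interval[OF _ assms(1)] interior_open[OF assms(2)] by auto
qed

lemma sum_interval_lengths_le_measure:
  fixes D :: "(real \<times> real) set"
  assumes "finite D" and disj: "disjoint_family_on (\<lambda>(p,q). {p<..<q}) D"
    and sub: "\<And>p q. (p, q) \<in> D \<Longrightarrow> p \<le> q \<and> {p<..<q} \<subseteq> V" and "V \<in> lmeasurable"
  shows "(\<Sum>(p,q)\<in>D. q - p) \<le> measure lebesgue V"
proof -
  have "(\<Sum>(p,q)\<in>D. q - p) \<le> (\<Sum>d\<in>D. measure lebesgue ((\<lambda>(p,q). {p<..<q}) d))"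
    using sub by (intro sum_mono) auto
  also have "\<dots> = measure lebesgue (\<Union>d\<in>D. (\<lambda>(p,q). {p<..<q}) d)"
  proof (rule measure_finite_Union[symmetric, OF assms(1) _ disj])
    show "emeasure lebesgue ((\<lambda>(p,q). {p<..<q}) d) \<noteq> \<infinity>" for d :: "real \<times> real"
      using emeasure_lborel_box_finite[of "fst d" "snd d"] by (simp add: box_real case_prod_beta)
  qed auto
  also have "\<dots> \<le> measure lebesgue V"
    using assms(1,4) sub by (intro measure_mono_fmeasurable) (auto intro!: sets.finite_UN)
  finally show ?thesis .
qed

lemma negligible_small_open_superset:
  assumes "negligible E" "E \<subseteq> W" "open W" "bounded W" "\<delta> > 0"
  obtains V where "open V" "E \<subseteq> V" "V \<subseteq> W" "V \<in> lmeasurable" "measure lebesgue V < \<delta>"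
proof -
  have E: "E \<in> lmeasurable" "measure lebesgue E = 0"
    using assms(1) negligible_imp_measurable negligible_imp_measure0 by auto
  obtain U where U: "open U" "E \<subseteq> U" "U - E \<in> lmeasurable" "emeasure lebesgue (U - E) < ennreal \<delta>"
    using sets_lebesgue_outer_open[of E \<delta>] E(1) \<open>\<delta> > 0\<close> by (auto simp: fmeasurable_def)
  define V where "V = U \<inter> W"
  have V: "open V" "V \<in> lmeasurable"
    using U(1) assms(3,4) by (auto simp: V_def intro!: lmeasurable_open bounded_Int)
  have "measure lebesgue V \<le> measure lebesgue ((U - E) \<union> E)"
    using V(2) fmeasurable.Un[OF U(3) E(1)] by (intro measure_mono_fmeasurable) (auto simp: V_def)
  also have "\<dots> \<le> measure lebesgue (U - E) + measure lebesgue E"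
    using U(3) E(1) by (intro measure_Un_le) auto
  also have "\<dots> < \<delta>"
    using U(3,4) E(2) \<open>\<delta> > 0\<close> by (simp add: emeasure_eq_measure2 ennreal_less_iff)
  finally show thesis
    using that V U(2) assms(2) by (auto simp: V_def)
qed

lemma abs_cont_sum_over_components_lt:
  fixes g :: "real \<Rightarrow> 'a::real_normed_vector"
  assumes ac: "\<And>D. finite D \<and> (\<forall>(p,q)\<in>D. p \<le> q \<and> {p..q} \<subseteq> S)
        \<and> disjoint_family_on (\<lambda>(p,q). {p<..<q}) D \<and> (\<Sum>(p,q)\<in>D. q - p) < \<delta>
        \<Longrightarrow> (\<Sum>(p,q)\<in>D. norm (g q - g p)) < e"
    and S: "closed S" and V: "open V" "V \<subseteq> S" "V \<in> lmeasurable" "measure lebesgue V < \<delta>"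
    and \<G>: "finite \<G>" "\<G> \<subseteq> components V"
    and PQ: "\<And>C. C \<in> \<G> \<Longrightarrow> P C \<in> closure C \<and> Q C \<in> closure C"
  shows "(\<Sum>C\<in>\<G>. norm (g (Q C) - g (P C))) < e"
proof -
  define \<G>' where "\<G>' = {C \<in> \<G>. P C \<noteq> Q C}"
  define pr where "pr C = (min (P C) (Q C), max (P C) (Q C))" for C
  define I where "I d = {fst d<..<snd d}" for d :: "real \<times> real"
  have I_sub: "I (pr C) \<subseteq> C" if "C \<in> \<G>" for C
  proof -
    have "C \<in> components V" using that \<G>(2) by blast
    then have "is_interval C" "open C"
      using in_components_connected is_interval_connected_1 open_components[OF V(1)] by blast+
    then show ?thesis
      using open_interval_subset_of_closure PQ[OF that] by (auto simp: I_def pr_def min_def max_def)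
  qed
  have I_ne: "I (pr C) \<noteq> {}" if "C \<in> \<G>'" for C
    using that by (auto simp: \<G>'_def I_def pr_def min_def max_def)
  have I_meet: "C1 = C2" if C: "C1 \<in> \<G>'" "C2 \<in> \<G>'" and meet: "I (pr C1) \<inter> I (pr C2) \<noteq> {}"
    for C1 C2
  proof -
    have "C1 \<in> \<G>" "C2 \<in> \<G>" using C by (simp_all add: \<G>'_def)
    then have "C1 \<inter> C2 \<noteq> {}" "C1 \<in> components V" "C2 \<in> components V"
      using meet I_sub \<G>(2) by blast+
    then show ?thesis by (simp add: components_eq)
  qed
  have inj: "inj_on pr \<G>'"
  proof (rule inj_onI)
    fix C1 C2 assume "C1 \<in> \<G>'" "C2 \<in> \<G>'" "pr C1 = pr C2"
    then show "C1 = C2" using I_meet I_ne by (metis inf.idem)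
  qed
  define D where "D = pr ` \<G>'"
  have disj: "disjoint_family_on (\<lambda>(p,q). {p<..<q}) D"
  unfolding disjoint_family_on_def
  proof (intro ballI impI)
    fix d1 d2 assume "d1 \<in> D" "d2 \<in> D" "d1 \<noteq> d2"
    then obtain C1 C2 where "C1 \<in> \<G>'" "C2 \<in> \<G>'" "d1 = pr C1" "d2 = pr C2" "C1 \<noteq> C2"
      unfolding D_def by blast
    then have "I d1 \<inter> I d2 = {}" using I_meet by blast
    then show "(\<lambda>(p,q). {p<..<q}) d1 \<inter> (\<lambda>(p,q). {p<..<q}) d2 = {}"
      by (simp add: I_def case_prod_beta)
  qed
  have pr_props: "fst (pr C) \<le> snd (pr C) \<and> {fst (pr C)..snd (pr C)} \<subseteq> S \<and> I (pr C) \<subseteq> V"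
    if C: "C \<in> \<G>" for C
  proof -
    have CV: "C \<subseteq> V" using C \<G>(2) in_components_subset by blast
    have "closure C \<subseteq> S" using closure_minimal[OF _ S] CV V(2) by blast
    moreover have "{fst (pr C)..snd (pr C)} \<subseteq> I (pr C) \<union> {P C, Q C}"
      by (auto simp: I_def pr_def min_def max_def)
    ultimately have "{fst (pr C)..snd (pr C)} \<subseteq> S"
      using I_sub[OF C] PQ[OF C] closure_subset by blast
    then show ?thesis using I_sub[OF C] CV by (auto simp: pr_def)
  qed
  have D_props: "p \<le> q \<and> {p..q} \<subseteq> S \<and> {p<..<q} \<subseteq> V" if pq: "(p, q) \<in> D" for p q
  proof -
    obtain C where C: "C \<in> \<G>" "(p, q) = pr C"
      using pq unfolding D_def \<G>'_def by blast
    then have "p = fst (pr C)" "q = snd (pr C)" by (metis fst_conv snd_conv)+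
    then show ?thesis using pr_props[OF C(1)] by (simp add: I_def)
  qed
  have "(\<Sum>C\<in>\<G>. norm (g (Q C) - g (P C))) = (\<Sum>C\<in>\<G>'. norm (g (Q C) - g (P C)))"
    using \<G>(1) by (intro sum.mono_neutral_right) (auto simp: \<G>'_def)
  also have "\<dots> = (\<Sum>C\<in>\<G>'. (\<lambda>(p,q). norm (g q - g p)) (pr C))"
    by (intro sum.cong) (auto simp: pr_def min_def max_def norm_minus_commute)
  also have "\<dots> = (\<Sum>(p,q)\<in>D. norm (g q - g p))"
    unfolding D_def by (rule sum.reindex[symmetric, OF inj, unfolded comp_def])
  also have "\<dots> < e"
  proof (rule ac, intro conjI)
    show "finite D" using \<G>(1) by (simp add: D_def \<G>'_def)
    show "\<forall>(p,q)\<in>D. p \<le> q \<and> {p..q} \<subseteq> S" using D_props by blast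
    show "disjoint_family_on (\<lambda>(p,q). {p<..<q}) D" by (fact disj)
    have "(\<Sum>(p,q)\<in>D. q - p) \<le> measure lebesgue V"
    proof (rule sum_interval_lengths_le_measure[OF _ disj _ V(3)])
      show "finite D" using \<G>(1) by (simp add: D_def \<G>'_def)
      show "p \<le> q \<and> {p<..<q} \<subseteq> V" if pq: "(p, q) \<in> D" for p q
        using that D_props by blast
    qed
    then show "(\<Sum>(p,q)\<in>D. q - p) < \<delta>" using V(4) by linarith
  qed
  finally show ?thesis .
qed

lemma abs_cont_on_negligible_image:
  fixes g :: "real \<Rightarrow> real"
  assumes ac: "abs_cont_on {a..b} g" and E: "negligible E" "E \<subseteq> {a<..<b}"
  shows "negligible (g ` E)"
  unfolding negligible_outer_le
proof (intro allI impI)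
  fix e :: real assume "e > 0"
  then obtain \<delta> where "\<delta> > 0" and \<delta>: "\<And>D. finite D \<and> (\<forall>(p,q)\<in>D. p \<le> q \<and> {p..q} \<subseteq> {a..b})
        \<and> disjoint_family_on (\<lambda>(p,q). {p<..<q}) D \<and> (\<Sum>(p,q)\<in>D. q - p) < \<delta>
        \<Longrightarrow> (\<Sum>(p,q)\<in>D. norm (g q - g p)) < e"
    using ac unfolding abs_cont_on_def by meson
  obtain V where V: "open V" "E \<subseteq> V" "V \<subseteq> {a<..<b}" "V \<in> lmeasurable" "measure lebesgue V < \<delta>"
    using negligible_small_open_superset[OF E] \<open>\<delta> > 0\<close> by auto
  have "\<exists>p\<in>closure C. \<exists>q\<in>closure C. \<forall>x\<in>closure C. g p \<le> g x \<and> g x \<le> g q"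
    if C: "C \<in> components V" for C
  proof -
    have "C \<subseteq> {a..b}" using in_components_subset[OF C] V(3) by auto
    then have sub: "closure C \<subseteq> {a..b}" by (rule closure_minimal) simp
    then have "compact (closure C)"
      using compact_Icc compact_Int_closed[of "{a..b}" "closure C"] by (simp add: Int_absorb1)
    moreover have "closure C \<noteq> {}" using C in_components_nonempty by auto
    moreover have "continuous_on (closure C) g"
      using continuous_on_subset[OF abs_cont_on_imp_continuous_on[OF ac] sub] .
    ultimately show ?thesis
      using continuous_attains_inf continuous_attains_sup by metis
  qed
  then obtain P Q where PQ: "\<And>C. C \<in> components V \<Longrightarrow> P C \<in> closure C \<and> Q C \<in> closure C \<and>
      (\<forall>x\<in>closure C. g (P C) \<le> g x \<and> g x \<le> g (Q C))"
    by metis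
  define J where "J C = {g (P C) .. g (Q C)}" for C
  have cover: "g ` E \<subseteq> (\<Union>C\<in>components V. J C)"
  proof
    fix y assume "y \<in> g ` E"
    then obtain x where x: "x \<in> E" "y = g x" by auto
    then obtain C where C: "C \<in> components V" "x \<in> C"
      using V(2) Union_components[of V] by blast
    then show "y \<in> (\<Union>C\<in>components V. J C)"
      using PQ[OF C(1)] closure_subset x by (auto simp: J_def)
  qed
  have countable: "countable (components V)"
    by (rule countable_disjoint_open_subsets)
       (auto simp: open_components[OF V(1)] pairwise_def disjnt_def components_nonoverlap)
  have bound: "measure lebesgue (\<Union>C\<in>\<G>. J C) \<le> e"
    if \<G>: "\<G> \<subseteq> components V" "finite \<G>" for \<G>
  proof -
    have "measure lebesgue (\<Union>C\<in>\<G>. J C) \<le> (\<Sum>C\<in>\<G>. measure lebesgue (J C))"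
      using \<G>(2) by (intro measure_UNION_le) (auto simp: J_def)
    also have "\<dots> = (\<Sum>C\<in>\<G>. norm (g (Q C) - g (P C)))"
      using \<G>(1) PQ by (intro sum.cong) (auto simp: J_def)
    also have "\<dots> < e"
    proof (rule abs_cont_sum_over_components_lt[OF \<delta> closed_atLeastAtMost V(1) _ V(4,5) \<G>(2,1)])
      show "V \<subseteq> {a..b}" using V(3) by auto
      show "P C \<in> closure C \<and> Q C \<in> closure C" if "C \<in> \<G>" for C
        using PQ that \<G>(1) by blast
    qed
    finally show ?thesis by simp
  qed
  have "(\<Union>C\<in>components V. J C) \<in> lmeasurable"
    "measure lebesgue (\<Union>C\<in>components V. J C) \<le> e"
    using fmeasurable_UN_bound[OF countable _ bound] measure_UN_bound[OF countable _ bound]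
    by (auto simp: J_def)
  with cover show "\<exists>T. g ` E \<subseteq> T \<and> T \<in> lmeasurable \<and> measure lebesgue T \<le> e" by blast
qed

lemma continuous_on_last_point_in_closed:
  fixes f :: "real \<Rightarrow> 'a::topological_space"
  assumes cont: "continuous_on {a..b} f" and S: "closed S" and "a \<le> b" "f a \<in> S" "f b \<notin> S"
  obtains t where "a \<le> t" "t < b" "f t \<in> S" "\<And>s. t < s \<Longrightarrow> s \<le> b \<Longrightarrow> f s \<notin> S"
proof -
  define T where "T = {a..b} \<inter> f -` S"
  have "closed T"
    unfolding T_def by (rule continuous_closed_preimage[OF cont closed_atLeastAtMost S])
  moreover have "T \<noteq> {}" using assms(3,4) by (auto simp: T_def)
  moreover have "bdd_above T" unfolding T_def by (rule bdd_above_Int1) simp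
  ultimately have "Sup T \<in> T" by (rule closed_contains_Sup[rotated 2])
  moreover have "s \<notin> T" if "Sup T < s" for s
    using cSup_upper[OF _ \<open>bdd_above T\<close>] that by fastforce
  moreover have "Sup T \<noteq> b" using \<open>Sup T \<in> T\<close> assms(5) by (auto simp: T_def)
  ultimately show thesis
    by (intro that[of "Sup T"]) (auto simp: T_def)
qed

lemma abs_cont_on_strict_increase_point:
  fixes g :: "real \<Rightarrow> real"
  assumes ac: "abs_cont_on {a..b} g" and "a \<le> b" "g a < g b" and "negligible N"
  obtains t where "a < t" "t < b" "t \<notin> N" "\<And>s. t < s \<Longrightarrow> s \<le> b \<Longrightarrow> g t < g s"
proof -
  have cont: "continuous_on {a..b} g" by (rule abs_cont_on_imp_continuous_on[OF ac])
  have "negligible (g ` (N \<inter> {a<..<b}))"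
    using \<open>negligible N\<close> by (intro abs_cont_on_negligible_image[OF ac]) (auto intro: negligible_subset)
  moreover have "\<not> negligible {g a<..<g b}"
    using negligible_interval(2)[of "g a" "g b"] \<open>g a < g b\<close> by (simp add: box_real)
  ultimately obtain y where y: "g a < y" "y < g b" "y \<notin> g ` (N \<inter> {a<..<b})"
    by (metis greaterThanLessThan_iff negligible_subset subsetI)
  obtain t where t: "a \<le> t" "t < b" "g t \<in> {..y}" and "\<And>s. t < s \<Longrightarrow> s \<le> b \<Longrightarrow> g s \<notin> {..y}"
    using continuous_on_last_point_in_closed[OF cont closed_atMost \<open>a \<le> b\<close>, of y] y(1,2) by auto
  then have above: "\<And>s. t < s \<Longrightarrow> s \<le> b \<Longrightarrow> y < g s" by (simp add: not_le)
  \<comment> \<open>by right continuity the last point below the level lies on it\<close>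
  have "(g \<longlongrightarrow> g t) (at_right t)"
    using continuous_on_subset[OF cont, of "{t..b}"] t
    by (auto simp: continuous_on_def at_within_Icc_at_right[symmetric])
  moreover have "\<forall>\<^sub>F s in at_right t. y \<le> g s"
    using eventually_at_right_real[OF \<open>t < b\<close>] by (rule eventually_mono) (simp add: above less_imp_le)
  ultimately have "y \<le> g t" by (rule tendsto_lowerbound) simp
  with t(3) have "g t = y" by simp
  then have "a < t" "t \<notin> N" using y t(1,2) by (auto simp: le_less)
  then show thesis using that t(2) above \<open>g t = y\<close> by blast
qed

lemma has_real_derivative_inner_self_diff:
  fixes \<phi> :: "real \<Rightarrow> 'a::real_inner"
  assumes "(\<phi> has_vector_derivative v) (at t within W)"
  shows "((\<lambda>s. (\<phi> s - y) \<bullet> (\<phi> s - y)) has_real_derivative 2 * ((\<phi> t - y) \<bullet> v)) (at t within W)"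
proof -
  have d: "((\<lambda>s. \<phi> s - y) has_derivative (\<lambda>h. h *\<^sub>R v)) (at t within W)"
    using assms by (auto simp: has_vector_derivative_def intro!: derivative_eq_intros)
  show ?thesis unfolding has_field_derivative_def
    by (rule has_derivative_eq_rhs[OF has_derivative_inner[OF d d]])
       (auto simp: inner_commute algebra_simps fun_eq_iff)
qed

lemma infdist_right_increment_le:
  fixes \<phi> :: "real \<Rightarrow> 'a::real_inner"
  assumes \<phi>: "(\<phi> has_vector_derivative v) (at t within {t..b})" and "t < b"
    and y: "y \<in> Proj K (\<phi> t)" "\<phi> t \<noteq> y" and inward: "(\<phi> t - y) \<bullet> v \<le> 0" and "\<epsilon> > 0"
  shows "\<forall>\<^sub>F s in at_right t. infdist (\<phi> s) K \<le> infdist (\<phi> t) K + \<epsilon> * (s - t)"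
proof -
  define r where "r = norm (\<phi> t - y)"
  define Q where "Q s = (\<phi> s - y) \<bullet> (\<phi> s - y)" for s
  have r: "r > 0" "infdist (\<phi> t) K = r"
    using y by (simp add: r_def, simp add: r_def Proj_def dist_norm)
  have "(Q has_real_derivative 2 * ((\<phi> t - y) \<bullet> v)) (at_right t)"
    unfolding Q_def using has_real_derivative_inner_self_diff[OF \<phi>, of y]
    by (simp add: at_within_Icc_at_right[OF \<open>t < b\<close>])
  then have "((\<lambda>s. (Q s - Q t) / (s - t)) \<longlongrightarrow> 2 * ((\<phi> t - y) \<bullet> v)) (at_right t)"
    by (simp add: has_field_derivative_iff)
  moreover have "2 * ((\<phi> t - y) \<bullet> v) < \<epsilon> * r"
    using inward mult_pos_pos[OF \<open>\<epsilon> > 0\<close> r(1)] by linarith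
  ultimately have "\<forall>\<^sub>F s in at_right t. (Q s - Q t) / (s - t) < \<epsilon> * r"
    by (rule order_tendstoD(2))
  moreover have "\<forall>\<^sub>F s in at_right t. t < s" by (rule eventually_at_right_less)
  ultimately show ?thesis
  proof (rule eventually_elim2)
    fix s assume quot: "(Q s - Q t) / (s - t) < \<epsilon> * r" and "t < s"
    define \<rho> where "\<rho> = norm (\<phi> s - y)"
    have "infdist (\<phi> s) K \<le> \<rho>"
      using infdist_le[of y K "\<phi> s"] y(1) by (simp add: Proj_def \<rho>_def dist_norm)
    moreover have "\<rho> \<le> r + \<epsilon> * (s - t)"
    proof (rule ccontr)
      assume "\<not> ?thesis"
      then have far: "\<epsilon> * (s - t) < \<rho> - r" by simp
      have pos: "0 < \<rho> - r" using far \<open>\<epsilon> > 0\<close> \<open>t < s\<close> by (smt (verit) mult_pos_pos)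
      have "\<epsilon> * (s - t) * r < (\<rho> - r) * r" using far r(1) by (rule mult_strict_right_mono)
      also have "\<dots> \<le> (\<rho> - r) * (\<rho> + r)" using pos r(1) by (intro mult_left_mono) auto
      also have "\<dots> = Q s - Q t"
        by (simp add: Q_def \<rho>_def r_def power2_norm_eq_inner[symmetric] power2_eq_square algebra_simps)
      finally have "\<epsilon> * (s - t) * r < Q s - Q t" .
      with quot \<open>t < s\<close> show False by (simp add: pos_divide_less_eq mult_ac)
    qed
    ultimately show "infdist (\<phi> s) K \<le> infdist (\<phi> t) K + \<epsilon> * (s - t)" using r(2) by simp
  qed
qed

lemma Proj_nonempty:
  fixes K :: "'a::heine_borel set"
  assumes "closed K" "K \<noteq> {}"
  shows "Proj K x \<noteq> {}"
proof -
  obtain y where "y \<in> K" "infdist x K = dist x y"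
    using infdist_attains_inf[OF assms] by blast
  then have "y \<in> Proj K x" by (simp add: Proj_def)
  then show ?thesis by blast
qed

lemma abs_cont_on_exit_point:
  fixes \<phi> :: "real \<Rightarrow> 'a::real_normed_vector"
  assumes ac: "abs_cont_on {a..b} \<phi>" and K: "closed K" and "a \<le> b" "\<phi> a \<in> K" "\<phi> b \<notin> K"
    and "negligible N"
  obtains \<epsilon> t where "\<epsilon> > 0" "a < t" "t < b" "t \<notin> N" "\<phi> t \<notin> K"
    "\<And>s. t < s \<Longrightarrow> s \<le> b \<Longrightarrow> infdist (\<phi> t) K + \<epsilon> * (s - t) < infdist (\<phi> s) K"
proof -
  obtain s0 where s0: "a \<le> s0" "s0 < b" "\<phi> s0 \<in> K" and outside: "\<And>s. s0 < s \<Longrightarrow> s \<le> b \<Longrightarrow> \<phi> s \<notin> K"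
    using continuous_on_last_point_in_closed[OF abs_cont_on_imp_continuous_on[OF ac] K] assms(3-5)
    by blast
  define \<epsilon> where "\<epsilon> = infdist (\<phi> b) K / (2 * (b - s0))"
  have "infdist (\<phi> b) K > 0"
    using infdist_pos_not_in_closed[OF K] s0(3) assms(5) by blast
  then have "\<epsilon> > 0" using s0(2) by (simp add: \<epsilon>_def)
  have "\<epsilon> * (b - s0) = infdist (\<phi> b) K / 2"
    using s0(2) by (simp add: \<epsilon>_def field_simps)
  then have "\<epsilon> * b - \<epsilon> * s0 = infdist (\<phi> b) K / 2"
    by (simp only: right_diff_distrib)
  then have "infdist (\<phi> s0) K - \<epsilon> * s0 < infdist (\<phi> b) K - \<epsilon> * b"
    using \<open>infdist (\<phi> b) K > 0\<close> infdist_zero[OF s0(3)] by linarith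
  moreover have "abs_cont_on {s0..b} (\<lambda>s. infdist (\<phi> s) K - \<epsilon> * s)"
    using s0(1) by (intro abs_cont_on_infdist_minus_linear abs_cont_on_subset[OF ac]) auto
  ultimately obtain t where t: "s0 < t" "t < b" "t \<notin> N"
    and increase: "\<And>s. t < s \<Longrightarrow> s \<le> b \<Longrightarrow> infdist (\<phi> t) K - \<epsilon> * t < infdist (\<phi> s) K - \<epsilon> * s"
    using abs_cont_on_strict_increase_point[OF _ less_imp_le[OF s0(2)] _ \<open>negligible N\<close>] by blast
  have "infdist (\<phi> t) K + \<epsilon> * (s - t) < infdist (\<phi> s) K" if "t < s" "s \<le> b" for s
    using increase[OF that] by (simp add: right_diff_distrib)
  with t s0(1) outside \<open>\<epsilon> > 0\<close> show thesis
    by (intro that[of \<epsilon> t]) auto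
qed

lemma is_solution_derivative_off_negligible:
  assumes "is_solution F I \<phi>"
  obtains N where "negligible N"
    "\<And>t. t \<in> I \<Longrightarrow> t \<notin> N \<Longrightarrow> \<exists>v. (\<phi> has_vector_derivative v) (at t within I) \<and> v \<in> F (\<phi> t)"
proof -
  have "AE t in lebesgue. t \<in> I \<longrightarrow> (\<exists>v. (\<phi> has_vector_derivative v) (at t within I) \<and> v \<in> F (\<phi> t))"
    using assms by (simp add: is_solution_def)
  then obtain N where N: "N \<in> null_sets lebesgue" "\<And>t. t \<in> space lebesgue - N \<Longrightarrow>
      t \<in> I \<longrightarrow> (\<exists>v. (\<phi> has_vector_derivative v) (at t within I) \<and> v \<in> F (\<phi> t))"
    by (rule AE_E3) blast
  show thesis
    using N by (intro that[of N]) (auto simp: negligible_iff_null_sets)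
qed

lemma is_solution_initial_segment:
  assumes sol: "is_solution F I \<phi>" and "t1 \<in> I"
  shows "0 \<le> t1" "{0..t1} \<subseteq> I" "abs_cont_on {0..t1} \<phi>"
proof -
  show "0 \<le> t1" using assms by (auto simp: is_solution_def)
  show sub: "{0..t1} \<subseteq> I"
    using assms unfolding is_solution_def is_interval_1 by (meson atLeastAtMost_iff subsetI)
  show "abs_cont_on {0..t1} \<phi>"
    using sol sub unfolding is_solution_def loc_abs_cont_on_def by blast
qed

theorem lemma16:
  fixes F :: "real ^ 'n \<Rightarrow> (real ^ 'n) set" and K :: "(real ^ 'n) set"
  assumes "usc_setvalued F"
    and "\<And>x. F x \<noteq> {} \<and> compact (F x) \<and> convex (F x)"
    and "closed K"
    and "\<And>x y. x \<notin> K \<Longrightarrow> y \<in> Proj K x \<Longrightarrow> F x \<subseteq> contingent_cone K y"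
  shows "forward_invariant F K"
  unfolding forward_invariant_def
proof (intro allI impI subsetI)
  fix I \<phi> z assume "is_solution F I \<phi> \<and> \<phi> 0 \<in> K" "z \<in> \<phi> ` I"
  then obtain t1 where sol: "is_solution F I \<phi>" and "\<phi> 0 \<in> K" "t1 \<in> I" "z = \<phi> t1" by blast
  show "z \<in> K"
  proof (rule ccontr)
    assume "z \<notin> K"
    have "0 \<le> t1" and sub: "{0..t1} \<subseteq> I" and "abs_cont_on {0..t1} \<phi>"
      using is_solution_initial_segment[OF sol \<open>t1 \<in> I\<close>] by simp_all
    obtain N where "negligible N" and regular: "\<And>t. t \<in> I \<Longrightarrow> t \<notin> N \<Longrightarrow>
        \<exists>v. (\<phi> has_vector_derivative v) (at t within I) \<and> v \<in> F (\<phi> t)"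
      using is_solution_derivative_off_negligible[OF sol] by blast
    have "\<phi> t1 \<notin> K" using \<open>z \<notin> K\<close> \<open>z = \<phi> t1\<close> by simp
    obtain \<epsilon> t where "\<epsilon> > 0" "0 < t" "t < t1" "t \<notin> N" "\<phi> t \<notin> K"
      and growth: "\<And>s. t < s \<Longrightarrow> s \<le> t1 \<Longrightarrow> infdist (\<phi> t) K + \<epsilon> * (s - t) < infdist (\<phi> s) K"
      using abs_cont_on_exit_point[OF \<open>abs_cont_on {0..t1} \<phi>\<close> assms(3) \<open>0 \<le> t1\<close> \<open>\<phi> 0 \<in> K\<close>
          \<open>\<phi> t1 \<notin> K\<close> \<open>negligible N\<close>] by blast
    have "t \<in> I" using sub \<open>0 < t\<close> \<open>t < t1\<close> by auto
    then obtain v where v: "(\<phi> has_vector_derivative v) (at t within I)" "v \<in> F (\<phi> t)"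
      using regular \<open>t \<notin> N\<close> by blast
    obtain y where y: "y \<in> Proj K (\<phi> t)"
      using Proj_nonempty[OF assms(3)] \<open>\<phi> 0 \<in> K\<close> by blast
    have "\<phi> t \<noteq> y" using y \<open>\<phi> t \<notin> K\<close> by (auto simp: Proj_def)
    have "(\<phi> has_vector_derivative v) (at t within {t..t1})"
      using sub \<open>0 < t\<close> by (intro has_vector_derivative_within_subset[OF v(1)]) auto
    moreover have "(\<phi> t - y) \<bullet> v \<le> 0"
      using inner_Proj_contingent_cone_le_0[OF y] assms(4)[OF \<open>\<phi> t \<notin> K\<close> y] v(2) by blast
    ultimately have "\<forall>\<^sub>F s in at_right t. infdist (\<phi> s) K \<le> infdist (\<phi> t) K + \<epsilon> * (s - t)"
      using infdist_right_increment_le \<open>t < t1\<close> y \<open>\<phi> t \<noteq> y\<close> \<open>\<epsilon> > 0\<close> by blast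
    moreover have "\<forall>\<^sub>F s in at_right t. infdist (\<phi> t) K + \<epsilon> * (s - t) < infdist (\<phi> s) K"
      using eventually_at_right_real[OF \<open>t < t1\<close>] by (rule eventually_mono) (simp add: growth)
    ultimately have "\<forall>\<^sub>F s in at_right t. False"
      by (rule eventually_elim2) simp
    then show False by (simp add: trivial_limit_at_right_real)
  qed
qed

end
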